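(* Let $0<\lambda<\frac{5-\sqrt{21}}{2}$ and let $K$ be the attractor of the IFS $f_1(x)=\lambda x$, $f_2(x)=\lambda x+2\lambda$, $f_3(x)=\lambda x+3\lambda-\lambda^2$, $f_4(x)=\lambda x+1-\lambda$. For every $k\ge1$, $f_2\circ f_4(U_{2^k})\subseteq U_{2^{k+1}}$.
   Context: A coding of $x\in K$ is a sequence $(i_n)\in\{1,2,3,4\}^{\mathbb{N}}$ with $x=\lim_{n\to\infty}f_{i_1}\circ\cdots\circ f_{i_n}(0)$. $U_k$ denotes the set of $x\in K$ having exactly $k$ distinct codings. *)

theory Defs
  imports "HOL-Analysis.Analysis"
begin

definition ifs_shift :: "real \<Rightarrow> nat \<Rightarrow> real" where
  "ifs_shift l i = (if i = 1 then 0 else if i = 2 then 2 * l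
                    else if i = 3 then 3 * l - l ^ 2 else 1 - l)"

definition ifs_map :: "real \<Rightarrow> nat \<Rightarrow> real \<Rightarrow> real" where
  "ifs_map l i x = l * x + ifs_shift l i"

text \<open>comp_prefix l w n = f_{w 0} o ... o f_{w (n-1)} (sequences indexed from 0).\<close>
fun comp_prefix :: "real \<Rightarrow> (nat \<Rightarrow> nat) \<Rightarrow> nat \<Rightarrow> real \<Rightarrow> real" where
  "comp_prefix l w 0 = id"
| "comp_prefix l w (Suc n) = comp_prefix l w n \<circ> ifs_map l (w n)"

definition is_coding :: "real \<Rightarrow> (nat \<Rightarrow> nat) \<Rightarrow> real \<Rightarrow> bool" where
  "is_coding l w x \<longleftrightarrow> (\<forall>n. w n \<in> {1,2,3,4}) \<and> (\<lambda>n. comp_prefix l w n 0) \<longlonglongrightarrow> x"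

definition codings :: "real \<Rightarrow> real \<Rightarrow> (nat \<Rightarrow> nat) set" where
  "codings l x = {w. is_coding l w x}"

definition attractor :: "real \<Rightarrow> real set" where
  "attractor l = {x. codings l x \<noteq> {}}"

definition U :: "real \<Rightarrow> nat \<Rightarrow> real set" where
  "U l k = {x \<in> attractor l. finite (codings l x) \<and> card (codings l x) = k}"

end

theory Submission
  imports Defs
begin

text \<open>Every point of K lies in [0,1], so the first letter i of a coding of x satisfies
  x \<in> f_i[0,1], i.e. 0 \<le> x - t_i \<le> \<lambda>. The point x = f_2(f_4 y) = f_3(f_1 y) lies in
  f_2[0,1] \<inter> f_3[0,1] only; after f_2 the remaining point lies in f_4[0,1] only (here the bound
  on \<lambda> enters: 4\<lambda> - \<lambda>^2 < 1 - \<lambda>), and after f_3 it lies in f_1[0,1] only. So the codings of x are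
  exactly 24c and 31c for the codings c of y, and their number doubles.\<close>

lemma lambda_bounds:
  fixes l :: real
  assumes "l < (5 - sqrt 21) / 2"
  shows "4 * l < 1" and "4 * l - l\<^sup>2 < 1 - l"
proof -
  have sqrt21: "9 / 2 < sqrt 21"
    by (rule real_less_rsqrt) (simp add: power2_eq_square)
  then show "4 * l < 1"
    using assms by simp
  have "0 < (l - (5 - sqrt 21) / 2) * (l - (5 + sqrt 21) / 2)"
    using assms sqrt21 by (intro mult_neg_neg) auto
  also have "\<dots> = l\<^sup>2 - 5 * l + 1"
    by (simp add: power2_eq_square algebra_simps add_divide_distrib diff_divide_distrib)
  finally show "4 * l - l\<^sup>2 < 1 - l"
    by simp
qed

lemma comp_prefix_Suc_first:
  "comp_prefix l w (Suc n) x = ifs_map l (w 0) (comp_prefix l (\<lambda>i. w (Suc i)) n x)"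
  by (induction n arbitrary: x) auto

lemma inj_case_nat: "inj (case_nat a)"
proof (rule injI)
  fix c d :: "nat \<Rightarrow> 'a"
  assume "case_nat a c = case_nat a d"
  then show "c = d" by (metis nat.case(2) ext)
qed

lemma case_nat_head_tail: "case_nat (w 0) (\<lambda>i. w (Suc i)) = w"
  by (auto simp: fun_eq_iff split: nat.split)

lemma is_coding_case_nat:
  assumes "l \<noteq> 0"
  shows "is_coding l (case_nat a w) x \<longleftrightarrow>
           a \<in> {1,2,3,4} \<and> is_coding l w ((x - ifs_shift l a) / l)"
proof -
  define t where "t = ifs_shift l a"
  have letters: "(\<forall>n. case_nat a w n \<in> {1,2,3,4}) \<longleftrightarrow> a \<in> {1,2,3,4} \<and> (\<forall>n. w n \<in> {1,2,3,4})"
    by (metis nat.case not0_implies_Suc)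
  have shift: "(\<lambda>n. comp_prefix l (case_nat a w) (Suc n) 0) = (\<lambda>n. t + l * comp_prefix l w n 0)"
    unfolding comp_prefix_Suc_first by (simp add: ifs_map_def t_def add.commute)
  have "(\<lambda>n. comp_prefix l (case_nat a w) n 0) \<longlonglongrightarrow> x \<longleftrightarrow>
      (\<lambda>n. t + l * comp_prefix l w n 0) \<longlonglongrightarrow> x"
    unfolding shift[symmetric] by (rule filterlim_sequentially_Suc[symmetric])
  also have "\<dots> \<longleftrightarrow> (\<lambda>n. t + l * comp_prefix l w n 0) \<longlonglongrightarrow> t + l * ((x - t) / l)"
    using assms by simp
  also have "\<dots> \<longleftrightarrow> (\<lambda>n. comp_prefix l w n 0) \<longlonglongrightarrow> (x - t) / l"
    by (simp only: tendsto_add_const_iff tendsto_mult_left_iff[OF assms])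
  finally show ?thesis
    unfolding is_coding_def letters t_def by blast
qed

lemma is_coding_case_nat_ifs_map:
  assumes "l \<noteq> 0" "i \<in> {1,2,3,4}"
  shows "is_coding l (case_nat i w) (ifs_map l i x) \<longleftrightarrow> is_coding l w x"
  using assms by (simp add: is_coding_case_nat ifs_map_def)

lemma ifs_shift_bounds:
  assumes "0 < l" "4 * l \<le> 1" "i \<in> {1,2,3,4}"
  shows "ifs_shift l i \<in> {0..1 - l}"
proof -
  have "0 \<le> l\<^sup>2" "l\<^sup>2 \<le> l"
    using assms(1,2) by (auto simp: power2_eq_square)
  with assms show ?thesis
    by (auto simp: ifs_shift_def) (use \<open>0 \<le> l\<^sup>2\<close> in linarith)
qed

lemma ifs_map_unit_interval:
  assumes "0 < l" "4 * l \<le> 1" "i \<in> {1,2,3,4}" "z \<in> {0..1}"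
  shows "ifs_map l i z \<in> {0..1}"
proof -
  have "l * z \<in> {0..l}"
    using assms(1,4) mult_left_le[of z l] by auto
  then show ?thesis
    using ifs_shift_bounds[OF assms(1-3)] by (auto simp: ifs_map_def)
qed

lemma comp_prefix_unit_interval:
  assumes "0 < l" "4 * l \<le> 1" "\<forall>n. w n \<in> {1,2,3,4}"
  shows "comp_prefix l w n 0 \<in> {0..1}"
  using assms(3)
proof (induction n arbitrary: w)
  case (Suc n)
  show ?case
    unfolding comp_prefix_Suc_first
    by (rule ifs_map_unit_interval[OF assms(1,2)]) (use Suc in auto)
qed simp

lemma is_coding_unit_interval:
  assumes "0 < l" "4 * l \<le> 1" "is_coding l w x"
  shows "x \<in> {0..1}"
proof -
  have letters: "\<forall>n. w n \<in> {1,2,3,4}" and lim: "(\<lambda>n. comp_prefix l w n 0) \<longlonglongrightarrow> x"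
    using assms(3) by (auto simp: is_coding_def)
  have "comp_prefix l w n 0 \<in> {0..1}" for n
    using comp_prefix_unit_interval[OF assms(1,2) letters] .
  then show ?thesis
    using closed_atLeastAtMost lim by (metis closed_sequentially)
qed

lemma is_coding_first_letter:
  assumes "0 < l" "4 * l \<le> 1" "is_coding l w x"
  shows "w 0 \<in> {1,2,3,4}" and "x - ifs_shift l (w 0) \<in> {0..l}"
    and "is_coding l (\<lambda>i. w (Suc i)) ((x - ifs_shift l (w 0)) / l)"
proof -
  show "w 0 \<in> {1,2,3,4}" and tail: "is_coding l (\<lambda>i. w (Suc i)) ((x - ifs_shift l (w 0)) / l)"
    using assms is_coding_case_nat[of l "w 0" "\<lambda>i. w (Suc i)" x]
    by (simp_all add: case_nat_head_tail)
  have "(x - ifs_shift l (w 0)) / l \<in> {0..1}"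
    using is_coding_unit_interval[OF assms(1,2) tail] .
  then show "x - ifs_shift l (w 0) \<in> {0..l}"
    using assms(1) by (auto simp: divide_le_eq_1 zero_le_divide_iff)
qed

lemma first_letter_forced:
  assumes "0 < l" "4 * l < 1" "4 * l - l\<^sup>2 < 1 - l"
    and "i \<in> {1,2,3,4}" "x - ifs_shift l i \<in> {0..l}"
  shows "x \<in> {3 * l - l\<^sup>2..3 * l} \<Longrightarrow> i = 2 \<or> i = 3"
    and "x \<in> {1 - l..1} \<Longrightarrow> i = 4"
    and "x \<in> {0..l} \<Longrightarrow> i = 1"
proof -
  have "l\<^sup>2 < l"
    using assms(1,2) by (simp add: power2_eq_square)
  with assms show "x \<in> {3 * l - l\<^sup>2..3 * l} \<Longrightarrow> i = 2 \<or> i = 3"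
    and "x \<in> {1 - l..1} \<Longrightarrow> i = 4" and "x \<in> {0..l} \<Longrightarrow> i = 1"
    by (auto simp: ifs_shift_def)
qed

lemma is_coding_f2_f4:
  assumes "0 < l" "4 * l < 1" "4 * l - l\<^sup>2 < 1 - l" "y \<in> {0..1}"
    and "is_coding l w (ifs_map l 2 (ifs_map l 4 y))"
  shows "(w 0 = 2 \<and> w 1 = 4 \<or> w 0 = 3 \<and> w 1 = 1) \<and> is_coding l (\<lambda>i. w (Suc (Suc i))) y"
proof -
  define x where "x = ifs_map l 2 (ifs_map l 4 y)"
  define x1 where "x1 = (x - ifs_shift l (w 0)) / l"
  have l4: "4 * l \<le> 1"
    using assms(2) by simp
  have w0: "w 0 \<in> {1,2,3,4}" "x - ifs_shift l (w 0) \<in> {0..l}"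
    and tail: "is_coding l (\<lambda>i. w (Suc i)) x1"
    using is_coding_first_letter[OF assms(1) l4 assms(5)] by (simp_all add: x_def x1_def)
  have w1: "w 1 \<in> {1,2,3,4}" "x1 - ifs_shift l (w 1) \<in> {0..l}"
    and tail2: "is_coding l (\<lambda>i. w (Suc (Suc i))) ((x1 - ifs_shift l (w 1)) / l)"
    using is_coding_first_letter[OF assms(1) l4 tail] by simp_all
  have ly: "l * y \<in> {0..l}"
    using assms(1,4) mult_left_le[of y l] by auto
  then have "l * (l * y) \<in> {0..l\<^sup>2}"
    using assms(1) by (auto simp: power2_eq_square intro: mult_left_mono)
  moreover have x: "x = l * (l * y) + 3 * l - l\<^sup>2"
    by (simp add: x_def ifs_map_def ifs_shift_def algebra_simps power2_eq_square)
  ultimately consider "w 0 = 2" | "w 0 = 3"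
    using first_letter_forced(1)[OF assms(1-3) w0] by fastforce
  then show ?thesis
  proof cases
    case 1
    then have "x1 = l * y + 1 - l"
      using assms(1) by (simp add: x1_def x ifs_shift_def field_simps power2_eq_square)
    then have "w 1 = 4" and "(x1 - ifs_shift l (w 1)) / l = y"
      using first_letter_forced(2)[OF assms(1-3) w1] ly assms(1) by (auto simp: ifs_shift_def)
    with 1 tail2 show ?thesis
      by simp
  next
    case 2
    then have "x1 = l * y"
      using assms(1) by (simp add: x1_def x ifs_shift_def field_simps power2_eq_square)
    then have "w 1 = 1" and "(x1 - ifs_shift l (w 1)) / l = y"
      using first_letter_forced(3)[OF assms(1-3) w1] ly assms(1) by (auto simp: ifs_shift_def)
    with 2 tail2 show ?thesis
      by simp
  qed
qed

lemma codings_f2_f4: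
  assumes "0 < l" "4 * l < 1" "4 * l - l\<^sup>2 < 1 - l" "y \<in> {0..1}"
  shows "codings l (ifs_map l 2 (ifs_map l 4 y)) =
           (case_nat 2 \<circ> case_nat 4) ` codings l y \<union> (case_nat 3 \<circ> case_nat 1) ` codings l y"
proof (intro equalityI subsetI)
  fix w
  assume "w \<in> codings l (ifs_map l 2 (ifs_map l 4 y))"
  then have letters: "w 0 = 2 \<and> w 1 = 4 \<or> w 0 = 3 \<and> w 1 = 1"
    and tail: "(\<lambda>i. w (Suc (Suc i))) \<in> codings l y"
    using is_coding_f2_f4[OF assms] by (simp_all add: codings_def)
  have "w = case_nat (w 0) (case_nat (w 1) (\<lambda>i. w (Suc (Suc i))))"
    by (auto simp: fun_eq_iff split: nat.split)
  with letters have "w = (case_nat 2 \<circ> case_nat 4) (\<lambda>i. w (Suc (Suc i))) \<or>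
      w = (case_nat 3 \<circ> case_nat 1) (\<lambda>i. w (Suc (Suc i)))"
    by auto
  with tail show "w \<in> (case_nat 2 \<circ> case_nat 4) ` codings l y \<union> (case_nat 3 \<circ> case_nat 1) ` codings l y"
    by blast
next
  fix w
  assume "w \<in> (case_nat 2 \<circ> case_nat 4) ` codings l y \<union> (case_nat 3 \<circ> case_nat 1) ` codings l y"
  then obtain c where c: "is_coding l c y"
    and w: "w = case_nat 2 (case_nat 4 c) \<or> w = case_nat 3 (case_nat 1 c)"
    by (auto simp: codings_def)
  have f2_f4_eq_f3_f1: "ifs_map l 2 (ifs_map l 4 y) = ifs_map l 3 (ifs_map l 1 y)"
    by (simp add: ifs_map_def ifs_shift_def algebra_simps power2_eq_square)
  from w show "w \<in> codings l (ifs_map l 2 (ifs_map l 4 y))"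
  proof
    assume "w = case_nat 2 (case_nat 4 c)"
    with c assms(1) show ?thesis
      by (simp add: codings_def is_coding_case_nat_ifs_map)
  next
    assume "w = case_nat 3 (case_nat 1 c)"
    with c assms(1) show ?thesis
      by (simp add: codings_def is_coding_case_nat_ifs_map f2_f4_eq_f3_f1)
  qed
qed

lemma U_f2_f4:
  assumes "0 < l" "4 * l < 1" "4 * l - l\<^sup>2 < 1 - l" "y \<in> U l n"
  shows "ifs_map l 2 (ifs_map l 4 y) \<in> U l (2 * n)"
proof -
  define C where "C = codings l y"
  define A where "A = (case_nat 2 \<circ> case_nat 4) ` C"
  define B where "B = (case_nat 3 \<circ> case_nat 1) ` C"
  have C: "finite C" "card C = n" "C \<noteq> {}"
    using assms(4) by (auto simp: U_def attractor_def C_def)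
  then have "y \<in> {0..1}"
    using is_coding_unit_interval[of l] assms(1,2) by (auto simp: C_def codings_def)
  then have codings: "codings l (ifs_map l 2 (ifs_map l 4 y)) = A \<union> B"
    using codings_f2_f4[OF assms(1-3)] by (simp add: A_def B_def C_def)
  have "inj_on (case_nat a \<circ> case_nat b) C" for a b :: nat
    by (rule inj_on_subset[OF inj_compose[OF inj_case_nat inj_case_nat] subset_UNIV])
  then have "card A = n" "card B = n"
    unfolding A_def B_def using C(2) by (simp_all only: card_image)
  moreover have "A \<inter> B = {}"
    by (auto simp: A_def B_def dest!: arg_cong[where f = "\<lambda>w. w 0"])
  moreover have "finite A" "finite B" "A \<noteq> {}"
    using C by (simp_all add: A_def B_def)
  ultimately show ?thesis
    by (simp add: U_def attractor_def codings card_Un_disjoint)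
qed

theorem lemma2p29:
  fixes l :: real and k :: nat
  assumes "0 < l" and "l < (5 - sqrt 21) / 2" and "k \<ge> 1"
  shows "(ifs_map l 2 \<circ> ifs_map l 4) ` U l (2 ^ k) \<subseteq> U l (2 ^ (k + 1))"
proof (rule image_subsetI)
  fix y
  assume "y \<in> U l (2 ^ k)"
  then have "ifs_map l 2 (ifs_map l 4 y) \<in> U l (2 * 2 ^ k)"
    using U_f2_f4 assms(1) lambda_bounds[OF assms(2)] by blast
  then show "(ifs_map l 2 \<circ> ifs_map l 4) y \<in> U l (2 ^ (k + 1))"
    by simp
qed

end
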